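(* Let $F:\mathcal{G}_{\Sigma,\Delta,\pi}\to\mathcal{G}_{\Sigma,\Delta,\pi}$ be a causal graph dynamics that is monotonic for the subgraph order and admits a monotonic local rule, and let $\widetilde{F}:\mathbf{G}_{\Sigma,\Delta,\pi}\to\mathbf{G}_{\Sigma,\Delta,\pi}$ be a functor with $\mathrm{U}\circ F=\widetilde{F}\circ\mathrm{U}$. Then the map $\overline{F}:\mathrm{Sym}_{\mathcal{V}}\to\mathrm{Sym}_{\mathcal{V}}$, $\overline{F}(R):=|\widetilde{F}(\varnothing_R)|$, is a group homomorphism.
   Context: Fix an uncountably infinite set $\mathcal{V}$, sets $\Sigma,\Delta$, finite $\pi$; $\mathrm{Sym}_{\mathcal{V}}$ is the group of bijections (renamings) of $\mathcal{V}$. Graphs: countable $V(G)\subset\mathcal{V}$, a set $E(G)$ of pairwise disjoint two-element subsets of $V(G)\times\pi$, partial labelings $\sigma(G),\delta(G)$; $\mathcal{G}_{\Sigma,\Delta,\pi}$ the set of graphs, ordered by componentwise inclusion $\subseteq$. Renamings act naturally on graphs ($V(R(G))=R(V(G))$, edges $\{u\!:\!i,v\!:\!j\}\mapsto\{R(u)\!:\!i,R(v)\!:\!j\}$, labelings precomposed with $R^{-1}$). Disks $G^r_c$: vertices at distance $\le r+1$ from $c$, edges with an endpoint at distance $\le r$, vertex labels only at distance $\le r$. A local rule of radius $r$ maps radius-$r$ disks to graphs with renaming covariance, disjointness preservation, bounded output size and pairwise consistency of outputs on a common graph; a CGD is $F(G)=\bigcup_{v\in V(G)} f(G^r_v)$;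 monotonic means w.r.t. $\subseteq$ (disks compared with same center). Category $\mathbf{G}_{\Sigma,\Delta,\pi}$: objects graphs, morphisms $m:G\to H$ given by renamings $|m|$ with $|m|(G)\subseteq H$, composition by composition of renamings. $\mathrm{U}$ is the identity on objects and sends an inclusion $G\subseteq H$ to the morphism with identity renaming. $\varnothing_R:\varnothing\to\varnothing$ is the endomorphism of the empty graph with renaming $R$. *)

theory Defs
  imports Main "HOL-Library.Countable_Set" "HOL-Algebra.Bij"
begin

text \<open>Vertex names of type 'v (the set V is the universe of 'v, assumed uncountable in the
theorem), ports of the finite type 'p (the finite set pi), vertex labels 's (Sigma),
edge labels 'd (Delta).\<close>

record ('v, 'p, 's, 'd) graph =
  verts :: "'v set"
  edges :: "('v \<times> 'p) set set"
  vlab  :: "'v \<rightharpoonup> 's"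
  elab  :: "('v \<times> 'p) set \<rightharpoonup> 'd"

definition wf_graph :: "('v, 'p, 's, 'd) graph \<Rightarrow> bool" where
  "wf_graph G \<longleftrightarrow>
     countable (verts G) \<and>
     (\<forall>e\<in>edges G. e \<subseteq> verts G \<times> UNIV \<and> card e = 2) \<and>
     (\<forall>e\<in>edges G. \<forall>e'\<in>edges G. e \<noteq> e' \<longrightarrow> e \<inter> e' = {}) \<and>
     dom (vlab G) \<subseteq> verts G \<and> dom (elab G) \<subseteq> edges G"

definition subgraph :: "('v, 'p, 's, 'd) graph \<Rightarrow> ('v, 'p, 's, 'd) graph \<Rightarrow> bool" where
  "subgraph G H \<longleftrightarrow> verts G \<subseteq> verts H \<and> edges G \<subseteq> edges H \<and>
     vlab G \<subseteq>\<^sub>m vlab H \<and> elab G \<subseteq>\<^sub>m elab H"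

definition gempty :: "('v, 'p, 's, 'd) graph" where
  "gempty = \<lparr>verts = {}, edges = {}, vlab = Map.empty, elab = Map.empty\<rparr>"

definition rename_port :: "('v \<Rightarrow> 'v) \<Rightarrow> ('v \<times> 'p) \<Rightarrow> ('v \<times> 'p)" where
  "rename_port R = (\<lambda>(u, i). (R u, i))"

definition rename :: "('v \<Rightarrow> 'v) \<Rightarrow> ('v, 'p, 's, 'd) graph \<Rightarrow> ('v, 'p, 's, 'd) graph" where
  "rename R G = \<lparr>verts = R ` verts G,
                 edges = (\<lambda>e. rename_port R ` e) ` edges G,
                 vlab = vlab G \<circ> inv_into UNIV R,
                 elab = (\<lambda>e. elab G (rename_port (inv_into UNIV R) ` e))\<rparr>"

text \<open>Union of a family of graphs (meaningful for pairwise consistent families).\<close>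
definition gunion :: "('v, 'p, 's, 'd) graph set \<Rightarrow> ('v, 'p, 's, 'd) graph" where
  "gunion S = \<lparr>verts = (\<Union>D\<in>S. verts D),
               edges = (\<Union>D\<in>S. edges D),
               vlab = (\<lambda>x. if \<exists>D\<in>S. x \<in> dom (vlab D)
                           then vlab (SOME D. D \<in> S \<and> x \<in> dom (vlab D)) x else None),
               elab = (\<lambda>x. if \<exists>D\<in>S. x \<in> dom (elab D)
                           then elab (SOME D. D \<in> S \<and> x \<in> dom (elab D)) x else None)\<rparr>"

text \<open>Two graphs are consistent when their union is a graph.\<close>
definition consistent :: "('v, 'p, 's, 'd) graph \<Rightarrow> ('v, 'p, 's, 'd) graph \<Rightarrow> bool" where
  "consistent G H \<longleftrightarrow>
     (\<forall>e\<in>edges G. \<forall>e'\<in>edges H. e \<noteq> e' \<longrightarrow> e \<inter> e' = {}) \<and>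
     (\<forall>x\<in>dom (vlab G) \<inter> dom (vlab H). vlab G x = vlab H x) \<and>
     (\<forall>x\<in>dom (elab G) \<inter> dom (elab H). elab G x = elab H x)"

definition adjrel :: "('v, 'p, 's, 'd) graph \<Rightarrow> ('v \<times> 'v) set" where
  "adjrel G = {(u, v). \<exists>i j. {(u, i), (v, j)} \<in> edges G}"

definition dist_le :: "('v, 'p, 's, 'd) graph \<Rightarrow> nat \<Rightarrow> 'v \<Rightarrow> 'v \<Rightarrow> bool" where
  "dist_le G n c v \<longleftrightarrow> c \<in> verts G \<and> (\<exists>k\<le>n. (c, v) \<in> adjrel G ^^ k)"

definition disk :: "('v, 'p, 's, 'd) graph \<Rightarrow> nat \<Rightarrow> 'v \<Rightarrow> ('v, 'p, 's, 'd) graph" where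
  "disk G r c =
     (let Es = {e \<in> edges G. \<exists>(u, i)\<in>e. dist_le G r c u} in
      \<lparr>verts = {v. dist_le G (Suc r) c v},
       edges = Es,
       vlab = vlab G |` {v. dist_le G r c v},
       elab = elab G |` Es\<rparr>)"

definition disks :: "nat \<Rightarrow> ('v \<times> ('v, 'p, 's, 'd) graph) set" where
  "disks r = {(c, disk G r c) | G c. wf_graph G \<and> c \<in> verts G}"

definition local_rule ::
  "nat \<Rightarrow> ('v \<times> ('v, 'p, 's, 'd) graph \<Rightarrow> ('v, 'p, 's, 'd) graph) \<Rightarrow> bool" where
  "local_rule r f \<longleftrightarrow>
     (\<forall>D\<in>disks r. wf_graph (f D)) \<and>
     \<comment> \<open>renaming covariance\<close>
     (\<forall>R c D. bij R \<longrightarrow> (c, D) \<in> disks r \<longrightarrow> f (R c, rename R D) = rename R (f (c, D))) \<and>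
     \<comment> \<open>disjointness preservation\<close>
     (\<forall>c D c' D'. (c, D) \<in> disks r \<longrightarrow> (c', D') \<in> disks r \<longrightarrow> verts D \<inter> verts D' = {} \<longrightarrow>
         verts (f (c, D)) \<inter> verts (f (c', D')) = {}) \<and>
     \<comment> \<open>bounded output size\<close>
     (\<exists>b::nat. \<forall>D\<in>disks r. finite (verts (f D)) \<and> card (verts (f D)) \<le> b) \<and>
     \<comment> \<open>pairwise consistency on a common graph\<close>
     (\<forall>G u v. wf_graph G \<longrightarrow> u \<in> verts G \<longrightarrow> v \<in> verts G \<longrightarrow>
         consistent (f (u, disk G r u)) (f (v, disk G r v)))"

definition monotonic_local_rule ::
  "nat \<Rightarrow> ('v \<times> ('v, 'p, 's, 'd) graph \<Rightarrow> ('v, 'p, 's, 'd) graph) \<Rightarrow> bool" where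
  "monotonic_local_rule r f \<longleftrightarrow>
     (\<forall>c D D'. (c, D) \<in> disks r \<longrightarrow> (c, D') \<in> disks r \<longrightarrow> subgraph D D' \<longrightarrow>
         subgraph (f (c, D)) (f (c, D')))"

definition induced_by ::
  "(('v, 'p, 's, 'd) graph \<Rightarrow> ('v, 'p, 's, 'd) graph) \<Rightarrow> nat \<Rightarrow>
   ('v \<times> ('v, 'p, 's, 'd) graph \<Rightarrow> ('v, 'p, 's, 'd) graph) \<Rightarrow> bool" where
  "induced_by F r f \<longleftrightarrow>
     (\<forall>G. wf_graph G \<longrightarrow> F G = gunion ((\<lambda>v. f (v, disk G r v)) ` verts G))"

definition CGD :: "(('v, 'p, 's, 'd) graph \<Rightarrow> ('v, 'p, 's, 'd) graph) \<Rightarrow> bool" where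
  "CGD F \<longleftrightarrow> (\<forall>G. wf_graph G \<longrightarrow> wf_graph (F G)) \<and>
     (\<exists>r f. local_rule r f \<and> induced_by F r f)"

definition monotonic_graph_map :: "(('v, 'p, 's, 'd) graph \<Rightarrow> ('v, 'p, 's, 'd) graph) \<Rightarrow> bool" where
  "monotonic_graph_map F \<longleftrightarrow>
     (\<forall>G H. wf_graph G \<longrightarrow> wf_graph H \<longrightarrow> subgraph G H \<longrightarrow> subgraph (F G) (F H))"

definition admits_monotonic_local_rule ::
  "(('v, 'p, 's, 'd) graph \<Rightarrow> ('v, 'p, 's, 'd) graph) \<Rightarrow> bool" where
  "admits_monotonic_local_rule F \<longleftrightarrow>
     (\<exists>r f. local_rule r f \<and> monotonic_local_rule r f \<and> induced_by F r f)"

type_synonym ('v, 'p, 's, 'd) gmorph =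
  "('v, 'p, 's, 'd) graph \<times> ('v \<Rightarrow> 'v) \<times> ('v, 'p, 's, 'd) graph"

definition msrc :: "('v, 'p, 's, 'd) gmorph \<Rightarrow> ('v, 'p, 's, 'd) graph" where
  "msrc m = fst m"
definition mren :: "('v, 'p, 's, 'd) gmorph \<Rightarrow> ('v \<Rightarrow> 'v)" where
  "mren m = fst (snd m)"
definition mtgt :: "('v, 'p, 's, 'd) gmorph \<Rightarrow> ('v, 'p, 's, 'd) graph" where
  "mtgt m = snd (snd m)"

definition is_morph :: "('v, 'p, 's, 'd) gmorph \<Rightarrow> bool" where
  "is_morph m \<longleftrightarrow> wf_graph (msrc m) \<and> wf_graph (mtgt m) \<and> bij (mren m) \<and>
     subgraph (rename (mren m) (msrc m)) (mtgt m)"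

definition mid :: "('v, 'p, 's, 'd) graph \<Rightarrow> ('v, 'p, 's, 'd) gmorph" where
  "mid G = (G, id, G)"

text \<open>mcomp m' m is m' after m (requires mtgt m = msrc m').\<close>
definition mcomp :: "('v, 'p, 's, 'd) gmorph \<Rightarrow> ('v, 'p, 's, 'd) gmorph \<Rightarrow> ('v, 'p, 's, 'd) gmorph" where
  "mcomp m' m = (msrc m, mren m' \<circ> mren m, mtgt m')"

definition is_functor ::
  "(('v, 'p, 's, 'd) graph \<Rightarrow> ('v, 'p, 's, 'd) graph) \<Rightarrow>
   (('v, 'p, 's, 'd) gmorph \<Rightarrow> ('v, 'p, 's, 'd) gmorph) \<Rightarrow> bool" where
  "is_functor Fo Fm \<longleftrightarrow>
     (\<forall>G. wf_graph G \<longrightarrow> wf_graph (Fo G)) \<and>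
     (\<forall>m. is_morph m \<longrightarrow> is_morph (Fm m) \<and> msrc (Fm m) = Fo (msrc m) \<and> mtgt (Fm m) = Fo (mtgt m)) \<and>
     (\<forall>G. wf_graph G \<longrightarrow> Fm (mid G) = mid (Fo G)) \<and>
     (\<forall>m m'. is_morph m \<longrightarrow> is_morph m' \<longrightarrow> mtgt m = msrc m' \<longrightarrow>
         Fm (mcomp m' m) = mcomp (Fm m') (Fm m))"

text \<open>U o F = F~ o U, where U is the identity on objects and sends an inclusion G \<subseteq> H to
the morphism (G, id, H).\<close>
definition U_commutes ::
  "(('v, 'p, 's, 'd) graph \<Rightarrow> ('v, 'p, 's, 'd) graph) \<Rightarrow>
   (('v, 'p, 's, 'd) graph \<Rightarrow> ('v, 'p, 's, 'd) graph) \<Rightarrow>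
   (('v, 'p, 's, 'd) gmorph \<Rightarrow> ('v, 'p, 's, 'd) gmorph) \<Rightarrow> bool" where
  "U_commutes F Fo Fm \<longleftrightarrow>
     (\<forall>G. wf_graph G \<longrightarrow> Fo G = F G) \<and>
     (\<forall>G H. wf_graph G \<longrightarrow> wf_graph H \<longrightarrow> subgraph G H \<longrightarrow> Fm (G, id, H) = (F G, id, F H))"

definition empty_morph :: "('v \<Rightarrow> 'v) \<Rightarrow> ('v, 'p, 's, 'd) gmorph" where
  "empty_morph R = (gempty, R, gempty)"

end

theory Submission
  imports Defs
begin

text \<open>The endomorphisms of the empty graph compose exactly as their renamings do, so any
functor on the category of graphs restricts to a homomorphism on them.\<close>

lemma rename_gempty [simp]: "rename R gempty = gempty"
  by (simp add: rename_def gempty_def fun_eq_iff)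

lemma wf_graph_gempty: "wf_graph gempty"
  by (simp add: wf_graph_def gempty_def)

lemma is_morph_empty_morph: "bij R \<Longrightarrow> is_morph (empty_morph R)"
  by (simp add: is_morph_def empty_morph_def msrc_def mtgt_def mren_def wf_graph_gempty
      subgraph_def)

lemma mcomp_empty_morph: "mcomp (empty_morph R) (empty_morph S) = empty_morph (R \<circ> S)"
  by (simp add: mcomp_def empty_morph_def msrc_def mtgt_def mren_def)

lemma is_functor_is_morph: "is_functor Fo Fm \<Longrightarrow> is_morph m \<Longrightarrow> is_morph (Fm m)"
  unfolding is_functor_def by blast

lemma is_functor_mcomp:
  "is_functor Fo Fm \<Longrightarrow> is_morph m \<Longrightarrow> is_morph m' \<Longrightarrow> mtgt m = msrc m' \<Longrightarrow>
    Fm (mcomp m' m) = mcomp (Fm m') (Fm m)"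
  unfolding is_functor_def by blast

lemma functor_bij_mren_empty_morph:
  assumes "is_functor Fo Fm" and "bij R"
  shows "bij (mren (Fm (empty_morph R)))"
  using is_functor_is_morph[OF assms(1) is_morph_empty_morph[OF assms(2)]]
  by (simp add: is_morph_def)

lemma functor_mren_empty_morph_comp:
  assumes "is_functor Fo Fm" and "bij R" and "bij S"
  shows "mren (Fm (empty_morph (R \<circ> S))) = mren (Fm (empty_morph R)) \<circ> mren (Fm (empty_morph S))"
proof -
  have "Fm (empty_morph (R \<circ> S)) = mcomp (Fm (empty_morph R)) (Fm (empty_morph S))"
    unfolding mcomp_empty_morph[symmetric] using assms
    by (intro is_functor_mcomp is_morph_empty_morph) (simp_all add: empty_morph_def msrc_def mtgt_def)
  then show ?thesis
    by (simp add: mcomp_def mren_def)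
qed

lemma hom_BijGroup_UNIV_intro:
  assumes "\<And>R. bij R \<Longrightarrow> bij (h R)"
    and "\<And>R S. bij R \<Longrightarrow> bij S \<Longrightarrow> h (R \<circ> S) = h R \<circ> h S"
  shows "h \<in> hom (BijGroup UNIV) (BijGroup UNIV)"
  using assms unfolding hom_def BijGroup_def Bij_def compose_def
  by (auto simp: bij_betw_def restrict_def comp_def)

theorem proposition4p10:
  fixes F :: "('v, 'p::finite, 's, 'd) graph \<Rightarrow> ('v, 'p, 's, 'd) graph"
    and Fo :: "('v, 'p, 's, 'd) graph \<Rightarrow> ('v, 'p, 's, 'd) graph"
    and Fm :: "('v, 'p, 's, 'd) gmorph \<Rightarrow> ('v, 'p, 's, 'd) gmorph"
  assumes "uncountable (UNIV :: 'v set)"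
    and "CGD F"
    and "monotonic_graph_map F"
    and "admits_monotonic_local_rule F"
    and "is_functor Fo Fm"
    and "U_commutes F Fo Fm"
  shows "(\<lambda>R. mren (Fm (empty_morph R))) \<in> hom (BijGroup (UNIV :: 'v set)) (BijGroup (UNIV :: 'v set))"
  using functor_bij_mren_empty_morph[OF \<open>is_functor Fo Fm\<close>]
    functor_mren_empty_morph_comp[OF \<open>is_functor Fo Fm\<close>]
  by (rule hom_BijGroup_UNIV_intro)

end
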